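(* Let $\mathfrak e_1,\mathfrak e_1',\mathfrak e_2$ be virtual extended $\mathbb Z$-segments with $\mathrm{Supp}(\mathfrak e_1)=\mathrm{Supp}(\mathfrak e_1')$, and with $\mathrm{Supp}(\mathfrak e_1)\subseteq\mathrm{Supp}(\mathfrak e_2)$ or $\mathrm{Supp}(\mathfrak e_1)\supseteq\mathrm{Supp}(\mathfrak e_2)$. Write $R(\mathfrak e_1,\mathfrak e_2)=(\widetilde{\mathfrak e_2},\widetilde{\mathfrak e_1})$ and $R(\mathfrak e_1',\mathfrak e_2)=(\widetilde{\mathfrak e_2}',\widetilde{\mathfrak e_1}')$. Then: (1) if $\mathfrak e_1\ne\mathfrak e_1'$, then $\widetilde{\mathfrak e_1}\ne\widetilde{\mathfrak e_1}'$; (2) if $\mathfrak e_1$ and $\mathfrak e_1'$ are adjacent, then $\widetilde{\mathfrak e_1}$ and $\widetilde{\mathfrak e_1}'$ are adjacent. Consequently $\mathfrak e_1\mapsto\widetilde{\mathfrak e_1}$ is a bijection of the set of virtual extended $\mathbb Z$-segments with support $\mathrm{Supp}(\mathfrak e_1)$ sending virtual intervals to virtual intervals; the analogous statement holds for the map given by $R(\mathfrak e_1,-)$.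
   Context: A $\mathbb Z$-segment is $[A,B]=\{A,\dots,B\}$, $A\ge B$ integers, length $b=A-B+1$. A virtual extended $\mathbb Z$-segment is $([A,B],l,\eta)$, $l\in\mathbb Z$, $l\le b/2$, $\eta\in\{\pm1\}$ with $\eta\sim-\eta$ iff $b=2l$; $\mathrm{Supp}=[A,B]$. Two are adjacent if they have the same support and either admit lifts with $\eta_1=\eta_2$, $|l_1-l_2|=1$, or $b$ is odd, $l_1=l_2=(b-1)/2$, $\eta_1=-\eta_2$. A virtual interval is a finite set of distinct virtual extended segments $\{\mathfrak e_1,\dots,\mathfrak e_r\}$ with $\mathfrak e_i$ adjacent to $\mathfrak e_{i+1}$. Row exchange: for $\mathfrak e_i=([A_i,B_i],l_i,\eta_i)$ ($i=1,2$) with nested supports, $R(\mathfrak e_1,\mathfrak e_2)=(\mathfrak e_2',\mathfrak e_1')$ with $\mathfrak e_i'=([A_i,B_i],l_i',\eta_i')$, where $b_i=A_i-B_i+1$, $\epsilon=(-1)^{A_1-B_1}\eta_1\eta_2$ (any lifts). Case 1, $[A_1,B_1]\subseteq[A_2,B_2]$: $(l_1',\eta_1')=(l_1,(-1)^{A_2-B_2}\eta_1)$ and (a) if $\epsilon=1$, $b_2-2l_2<2(b_1-2l_1)$: $(l_2',\eta_2')=(b_2-(l_2+(b_1-2l_1)),(-1)^{A_1-B_1}\eta_2)$; (b) if $\epsilon=1$, $b_2-2l_2\ge2(b_1-2l_1)$: $(l_2',\eta_2')=(l_2+(b_1-2l_1),(-1)^{A_1-B_1+1}\eta_2)$; (c)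 if $\epsilon=-1$: $(l_2',\eta_2')=(l_2-(b_1-2l_1),(-1)^{A_1-B_1+1}\eta_2)$. Case 2, $[A_1,B_1]\supsetneq[A_2,B_2]$: $(l_2',\eta_2')=(l_2,(-1)^{A_1-B_1}\eta_2)$ and (a) if $\epsilon=1$, $b_1-2l_1<2(b_2-2l_2)$: $(l_1',\eta_1')=(b_1-(l_1+(b_2-2l_2)),(-1)^{A_2-B_2}\eta_1)$; (b) if $\epsilon=1$, $b_1-2l_1\ge2(b_2-2l_2)$: $(l_1',\eta_1')=(l_1+(b_2-2l_2),(-1)^{A_2-B_2+1}\eta_1)$; (c) if $\epsilon=-1$: $(l_1',\eta_1')=(l_1-(b_2-2l_2),(-1)^{A_2-B_2+1}\eta_1)$. *)

theory Defs
  imports Main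
begin

text \<open>A virtual extended Z-segment ([A,B], l, eta) is represented by a canonical
  representative: VS A B l eta with A \<ge> B, 2 l \<le> b, eta \<in> {1,-1}, and, since
  eta ~ -eta exactly when b = 2 l, we normalise eta = 1 in that case.\<close>

datatype vseg = VS (sA: int) (sB: int) (sl: int) (seta: int)

definition seg_len :: "vseg \<Rightarrow> int" where
  "seg_len e = sA e - sB e + 1"

definition supp :: "vseg \<Rightarrow> int set" where
  "supp e = {sB e .. sA e}"

definition valid_vseg :: "vseg \<Rightarrow> bool" where
  "valid_vseg e \<longleftrightarrow> sB e \<le> sA e \<and> 2 * sl e \<le> seg_len e \<and> seta e \<in> {1, -1}
     \<and> (2 * sl e = seg_len e \<longrightarrow> seta e = 1)"

definition norm_vseg :: "vseg \<Rightarrow> vseg" where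
  "norm_vseg e = (if 2 * sl e = seg_len e then VS (sA e) (sB e) (sl e) 1 else e)"

definition eta_lifts :: "vseg \<Rightarrow> int set" where
  "eta_lifts e = (if 2 * sl e = seg_len e then {1, -1} else {seta e})"

definition vsegs_with_supp :: "int \<Rightarrow> int \<Rightarrow> vseg set" where
  "vsegs_with_supp A B = {e. valid_vseg e \<and> sA e = A \<and> sB e = B}"

definition adjacent :: "vseg \<Rightarrow> vseg \<Rightarrow> bool" where
  "adjacent e1 e2 \<longleftrightarrow> sA e1 = sA e2 \<and> sB e1 = sB e2 \<and>
     ((\<exists>h1\<in>eta_lifts e1. \<exists>h2\<in>eta_lifts e2. h1 = h2 \<and> \<bar>sl e1 - sl e2\<bar> = 1) \<or>
      (odd (seg_len e1) \<and> 2 * sl e1 = seg_len e1 - 1 \<and> 2 * sl e2 = seg_len e1 - 1 \<and>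
       seta e1 = - seta e2))"

definition virtual_interval :: "vseg set \<Rightarrow> bool" where
  "virtual_interval S \<longleftrightarrow> (\<exists>es. distinct es \<and> set es = S \<and> (\<forall>e\<in>S. valid_vseg e) \<and>
      (\<forall>i. Suc i < length es \<longrightarrow> adjacent (es ! i) (es ! Suc i)))"

definition sgnpow :: "int \<Rightarrow> int" where
  "sgnpow k = (if even k then 1 else -1)"

text \<open>Row exchange R(e1,e2) = (e2', e1'); meaningful only for nested supports.\<close>
definition row_exchange :: "vseg \<Rightarrow> vseg \<Rightarrow> vseg \<times> vseg" where
  "row_exchange e1 e2 =
    (let A1 = sA e1; B1 = sB e1; l1 = sl e1; h1 = seta e1;
         A2 = sA e2; B2 = sB e2; l2 = sl e2; h2 = seta e2;
         b1 = seg_len e1; b2 = seg_len e2;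
         eps = sgnpow (A1 - B1) * h1 * h2
     in if B2 \<le> B1 \<and> A1 \<le> A2 then
          (norm_vseg
             (if eps = 1 \<and> b2 - 2 * l2 < 2 * (b1 - 2 * l1)
              then VS A2 B2 (b2 - (l2 + (b1 - 2 * l1))) (sgnpow (A1 - B1) * h2)
              else if eps = 1
              then VS A2 B2 (l2 + (b1 - 2 * l1)) (sgnpow (A1 - B1 + 1) * h2)
              else VS A2 B2 (l2 - (b1 - 2 * l1)) (sgnpow (A1 - B1 + 1) * h2)),
           norm_vseg (VS A1 B1 l1 (sgnpow (A2 - B2) * h1)))
        else
          (norm_vseg (VS A2 B2 l2 (sgnpow (A1 - B1) * h2)),
           norm_vseg
             (if eps = 1 \<and> b1 - 2 * l1 < 2 * (b2 - 2 * l2)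
              then VS A1 B1 (b1 - (l1 + (b2 - 2 * l2))) (sgnpow (A2 - B2) * h1)
              else if eps = 1
              then VS A1 B1 (l1 + (b2 - 2 * l2)) (sgnpow (A2 - B2 + 1) * h1)
              else VS A1 B1 (l1 - (b2 - 2 * l2)) (sgnpow (A2 - B2 + 1) * h1))))"

end

theory Submission
  imports Defs
begin

text \<open>Identify a virtual extended segment ([A,B], l, \<eta>) with the integer \<eta> (b - 2 l). This is
  well defined on classes (it vanishes exactly when b = 2 l) and is a bijection from the
  segments with support [A,B] onto the integers congruent to b mod 2, under which adjacency
  becomes distance 2. In every case of the row exchange, both output segments have coordinate
  c \<plusminus> x, where x is the coordinate of the corresponding input and c is even (the same formula
  covers cases (a), (b) and (c)). So R(-, e2) and R(e1, -) act on coordinates by isometries of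
  b + 2\<int>; they are therefore bijections that preserve adjacency, hence virtual intervals.\<close>

lemma sgnpow_cases: "sgnpow k = 1 \<or> sgnpow k = -1"
  by (simp add: sgnpow_def)

lemma sgnpow_add_one: "sgnpow (k + 1) = - sgnpow k"
  by (simp add: sgnpow_def)

definition coord :: "vseg \<Rightarrow> int" where
  "coord e = seta e * (seg_len e - 2 * sl e)"

definition vseg_of_coord :: "int \<Rightarrow> int \<Rightarrow> int \<Rightarrow> vseg" where
  "vseg_of_coord A B x = VS A B ((A - B + 1 - \<bar>x\<bar>) div 2) (if x < 0 then -1 else 1)"

definition parity_class :: "int \<Rightarrow> int set" where
  "parity_class b = {x. even (b - x)}"

lemma coord_norm_vseg [simp]: "coord (norm_vseg e) = coord e"
  by (simp add: norm_vseg_def coord_def seg_len_def)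

lemma valid_vseg_VS:
  "valid_vseg (VS A B l h) \<longleftrightarrow> B \<le> A \<and> 2 * l \<le> A - B + 1 \<and> (h = 1 \<or> h = -1)
     \<and> (2 * l = A - B + 1 \<longrightarrow> h = 1)"
  by (auto simp: valid_vseg_def seg_len_def)

lemma bij_betw_coord:
  assumes "B \<le> A"
  shows "bij_betw coord (vsegs_with_supp A B) (parity_class (A - B + 1))"
proof (rule bij_betw_byWitness[where f' = "vseg_of_coord A B"])
  show "\<forall>e \<in> vsegs_with_supp A B. vseg_of_coord A B (coord e) = e"
    by (auto simp: vsegs_with_supp_def valid_vseg_def vseg_of_coord_def coord_def seg_len_def
        intro: vseg.expand)
  show "\<forall>x \<in> parity_class (A - B + 1). coord (vseg_of_coord A B x) = x"
    by (auto simp: parity_class_def vseg_of_coord_def coord_def seg_len_def)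
  show "coord ` vsegs_with_supp A B \<subseteq> parity_class (A - B + 1)"
    by (auto simp: vsegs_with_supp_def valid_vseg_def coord_def seg_len_def parity_class_def)
  show "vseg_of_coord A B ` parity_class (A - B + 1) \<subseteq> vsegs_with_supp A B"
  proof (rule image_subsetI)
    fix x assume "x \<in> parity_class (A - B + 1)"
    then have "even (A - B + 1 - \<bar>x\<bar>)"
      by (simp add: parity_class_def abs_if)
    then obtain k where "A - B + 1 - \<bar>x\<bar> = 2 * k" ..
    then show "vseg_of_coord A B x \<in> vsegs_with_supp A B"
      using assms by (auto simp: vsegs_with_supp_def valid_vseg_VS vseg_of_coord_def)
  qed
qed

lemma adjacent_iff_coord:
  assumes "valid_vseg e" "valid_vseg f" "sA e = sA f" "sB e = sB f"
  shows "adjacent e f \<longleftrightarrow> \<bar>coord e - coord f\<bar> = 2"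
proof -
  obtain A B l h where e: "e = VS A B l h" by (cases e)
  obtain l' h' where f: "f = VS A B l' h'" using assms(3,4) e by (cases f) auto
  have "B \<le> A" "2 * l \<le> A - B + 1" "h = 1 \<or> h = -1" "2 * l = A - B + 1 \<longrightarrow> h = 1"
    "2 * l' \<le> A - B + 1" "h' = 1 \<or> h' = -1" "2 * l' = A - B + 1 \<longrightarrow> h' = 1"
    using assms(1,2) unfolding e f valid_vseg_VS by auto
  then show ?thesis
    unfolding e f
    by (elim disjE) (auto simp: adjacent_def eta_lifts_def coord_def seg_len_def, presburger+)
qed


definition coord_isometry :: "int \<Rightarrow> int \<Rightarrow> (vseg \<Rightarrow> vseg) \<Rightarrow> bool" where
  "coord_isometry A B G \<longleftrightarrow> G ` vsegs_with_supp A B \<subseteq> vsegs_with_supp A B \<and>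
     (\<exists>c s. even c \<and> (s = 1 \<or> s = -1) \<and>
        (\<forall>e \<in> vsegs_with_supp A B. coord (G e) = c + s * coord e))"

lemma bij_betw_affine_parity_class:
  assumes "even c" "s = 1 \<or> s = -1"
  shows "bij_betw (\<lambda>x. c + s * x) (parity_class b) (parity_class b)"
  by (rule bij_betw_byWitness[where f' = "\<lambda>y. s * (y - c)"])
    (use assms in \<open>auto simp: parity_class_def\<close>)

lemma coord_isometry_bij_betw:
  assumes "coord_isometry A B G"
  shows "bij_betw G (vsegs_with_supp A B) (vsegs_with_supp A B)"
proof (cases "B \<le> A")
  case True
  obtain c s where img: "G ` vsegs_with_supp A B \<subseteq> vsegs_with_supp A B"
    and c: "even c" "s = 1 \<or> s = -1"
    and G: "\<forall>e \<in> vsegs_with_supp A B. coord (G e) = c + s * coord e"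
    using assms by (auto simp: coord_isometry_def)
  have "bij_betw ((\<lambda>x. c + s * x) \<circ> coord) (vsegs_with_supp A B) (parity_class (A - B + 1))"
    using bij_betw_coord[OF True] bij_betw_affine_parity_class[OF c] by (rule bij_betw_trans)
  then have "bij_betw (coord \<circ> G) (vsegs_with_supp A B) (parity_class (A - B + 1))"
    by (rule bij_betw_cong[THEN iffD1, rotated]) (simp add: G)
  then show ?thesis
    using bij_betw_comp_iff2[OF bij_betw_coord[OF True] img] by blast
next
  case False
  then have "vsegs_with_supp A B = {}"
    by (auto simp: vsegs_with_supp_def valid_vseg_def)
  then show ?thesis by (simp add: bij_betw_def)
qed

lemma coord_isometry_adjacent:
  assumes "coord_isometry A B G" "e \<in> vsegs_with_supp A B" "f \<in> vsegs_with_supp A B"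
    and "adjacent e f"
  shows "adjacent (G e) (G f)"
proof -
  obtain c s where s: "s = 1 \<or> s = -1"
    and G: "\<forall>e \<in> vsegs_with_supp A B. coord (G e) = c + s * coord e"
    using assms(1) by (auto simp: coord_isometry_def)
  have "G e \<in> vsegs_with_supp A B" "G f \<in> vsegs_with_supp A B"
    using assms(1-3) by (auto simp: coord_isometry_def)
  moreover have "\<bar>coord e - coord f\<bar> = 2"
    using assms(2-4) adjacent_iff_coord by (auto simp: vsegs_with_supp_def)
  then have "\<bar>coord (G e) - coord (G f)\<bar> = 2"
    using s G assms(2,3) by (auto simp: right_diff_distrib[symmetric] abs_mult)
  ultimately show ?thesis
    using adjacent_iff_coord by (auto simp: vsegs_with_supp_def)
qed

lemma virtual_interval_image:
  assumes "virtual_interval S" "inj_on G S" "\<forall>e \<in> S. valid_vseg (G e)"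
    and "\<forall>e \<in> S. \<forall>f \<in> S. adjacent e f \<longrightarrow> adjacent (G e) (G f)"
  shows "virtual_interval (G ` S)"
proof -
  obtain es where es: "distinct es" "set es = S"
      "\<forall>i. Suc i < length es \<longrightarrow> adjacent (es ! i) (es ! Suc i)"
    using assms(1) unfolding virtual_interval_def by blast
  have "distinct (map G es)"
    using es(1,2) assms(2) by (simp add: distinct_map)
  moreover have "\<forall>i. Suc i < length (map G es) \<longrightarrow> adjacent (map G es ! i) (map G es ! Suc i)"
    using es assms(4) by (auto simp: nth_mem)
  ultimately show ?thesis
    unfolding virtual_interval_def using es(2) assms(3) by (metis list.set_map image_iff)
qed

lemma coord_isometry_virtual_interval:
  assumes "coord_isometry A B G" "S \<subseteq> vsegs_with_supp A B" "virtual_interval S"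
  shows "virtual_interval (G ` S)"
proof (rule virtual_interval_image[OF assms(3)])
  show "inj_on G S"
    using coord_isometry_bij_betw[OF assms(1)] assms(2) by (meson bij_betw_def inj_on_subset)
  show "\<forall>e \<in> S. valid_vseg (G e)"
    using assms(1,2) by (auto simp: coord_isometry_def vsegs_with_supp_def)
  show "\<forall>e \<in> S. \<forall>f \<in> S. adjacent e f \<longrightarrow> adjacent (G e) (G f)"
    using coord_isometry_adjacent[OF assms(1)] assms(2) by blast
qed


definition twist :: "int \<Rightarrow> vseg \<Rightarrow> vseg" where
  "twist s e = norm_vseg (VS (sA e) (sB e) (sl e) (s * seta e))"

text \<open>The image of the segment e with the larger support in cases (a)--(c): m = b - 2 l and
  p = (-1)^(A - B) are taken from the smaller segment, and q is chosen so that \<epsilon> = q \<eta>(e).\<close>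

definition exchange_outer :: "int \<Rightarrow> int \<Rightarrow> int \<Rightarrow> vseg \<Rightarrow> vseg" where
  "exchange_outer m q p e = norm_vseg
     (if q * seta e = 1 \<and> seg_len e - 2 * sl e < 2 * m
      then VS (sA e) (sB e) (seg_len e - (sl e + m)) (p * seta e)
      else if q * seta e = 1
      then VS (sA e) (sB e) (sl e + m) (- p * seta e)
      else VS (sA e) (sB e) (sl e - m) (- p * seta e))"

lemma row_exchange_eq:
  "row_exchange e1 e2 =
    (let s1 = sgnpow (sA e1 - sB e1); s2 = sgnpow (sA e2 - sB e2) in
     if sB e2 \<le> sB e1 \<and> sA e1 \<le> sA e2
     then (exchange_outer (seg_len e1 - 2 * sl e1) (s1 * seta e1) s1 e2, twist s2 e1)
     else (twist s1 e2, exchange_outer (seg_len e2 - 2 * sl e2) (s1 * seta e2) s2 e1))"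
  by (simp add: row_exchange_def Let_def twist_def exchange_outer_def sgnpow_add_one mult_ac)

lemma coord_twist: "coord (twist s e) = s * coord e"
  unfolding twist_def coord_norm_vseg by (simp add: coord_def seg_len_def)

lemma coord_exchange_outer:
  assumes "seta e = 1 \<or> seta e = -1" "q = 1 \<or> q = -1"
  shows "coord (exchange_outer m q p e) = 2 * m * p * q - p * coord e"
  unfolding exchange_outer_def coord_norm_vseg
  using assms by (auto simp: coord_def seg_len_def algebra_simps)

lemma valid_twist:
  assumes "valid_vseg e" "s = 1 \<or> s = -1"
  shows "valid_vseg (twist s e)" "sA (twist s e) = sA e" "sB (twist s e) = sB e"
  using assms by (auto simp: twist_def norm_vseg_def valid_vseg_def seg_len_def)

lemma valid_exchange_outer:
  assumes "valid_vseg e" "p = 1 \<or> p = -1" "m \<ge> 0"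
  shows "valid_vseg (exchange_outer m q p e)"
    "sA (exchange_outer m q p e) = sA e" "sB (exchange_outer m q p e) = sB e"
  using assms by (auto simp: exchange_outer_def norm_vseg_def valid_vseg_def seg_len_def)


lemma coord_isometry_cong:
  assumes "coord_isometry A B H" "\<And>e. e \<in> vsegs_with_supp A B \<Longrightarrow> G e = H e"
  shows "coord_isometry A B G"
  using assms unfolding coord_isometry_def by (simp cong: image_cong)

lemma coord_isometry_twist:
  assumes "s = 1 \<or> s = -1"
  shows "coord_isometry A B (twist s)"
  unfolding coord_isometry_def
proof
  show "twist s ` vsegs_with_supp A B \<subseteq> vsegs_with_supp A B"
    using valid_twist[OF _ assms] by (auto simp: vsegs_with_supp_def)
  show "\<exists>c s'. even c \<and> (s' = 1 \<or> s' = -1) \<and>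
      (\<forall>e \<in> vsegs_with_supp A B. coord (twist s e) = c + s' * coord e)"
    using assms by (intro exI[of _ 0] exI[of _ s]) (simp add: coord_twist)
qed

lemma coord_isometry_exchange_outer:
  assumes "q = 1 \<or> q = -1" "p = 1 \<or> p = -1" "m \<ge> 0"
  shows "coord_isometry A B (exchange_outer m q p)"
  unfolding coord_isometry_def
proof
  show "exchange_outer m q p ` vsegs_with_supp A B \<subseteq> vsegs_with_supp A B"
    using valid_exchange_outer[OF _ assms(2,3)] by (auto simp: vsegs_with_supp_def)
  show "\<exists>c s. even c \<and> (s = 1 \<or> s = -1) \<and>
      (\<forall>e \<in> vsegs_with_supp A B. coord (exchange_outer m q p e) = c + s * coord e)"
    using assms coord_exchange_outer[OF _ assms(1)]
    by (intro exI[of _ "2 * m * p * q"] exI[of _ "- p"])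
      (auto simp: vsegs_with_supp_def valid_vseg_def)
qed

lemma coord_isometry_row_exchange_snd:
  assumes "valid_vseg e2"
  shows "coord_isometry A B (\<lambda>e. snd (row_exchange e e2))"
proof (cases "sB e2 \<le> B \<and> A \<le> sA e2")
  case True
  show ?thesis
    by (rule coord_isometry_cong[OF coord_isometry_twist[OF sgnpow_cases[of "sA e2 - sB e2"]]])
      (use True in \<open>auto simp: vsegs_with_supp_def row_exchange_eq Let_def\<close>)
next
  case False
  have "seta e2 = 1 \<or> seta e2 = -1" "seg_len e2 - 2 * sl e2 \<ge> 0"
    using assms by (auto simp: valid_vseg_def)
  then have "coord_isometry A B (exchange_outer (seg_len e2 - 2 * sl e2)
      (sgnpow (A - B) * seta e2) (sgnpow (sA e2 - sB e2)))"
    using sgnpow_cases[of "A - B"] by (intro coord_isometry_exchange_outer sgnpow_cases) auto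
  then show ?thesis
    by (rule coord_isometry_cong)
      (use False in \<open>auto simp: vsegs_with_supp_def row_exchange_eq Let_def\<close>)
qed

lemma coord_isometry_row_exchange_fst:
  assumes "valid_vseg e1"
  shows "coord_isometry A B (\<lambda>e. fst (row_exchange e1 e))"
proof (cases "B \<le> sB e1 \<and> sA e1 \<le> A")
  case True
  have "seta e1 = 1 \<or> seta e1 = -1" "seg_len e1 - 2 * sl e1 \<ge> 0"
    using assms by (auto simp: valid_vseg_def)
  then have "coord_isometry A B (exchange_outer (seg_len e1 - 2 * sl e1)
      (sgnpow (sA e1 - sB e1) * seta e1) (sgnpow (sA e1 - sB e1)))"
    using sgnpow_cases[of "sA e1 - sB e1"] by (intro coord_isometry_exchange_outer sgnpow_cases) auto
  then show ?thesis
    by (rule coord_isometry_cong)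
      (use True in \<open>auto simp: vsegs_with_supp_def row_exchange_eq Let_def\<close>)
next
  case False
  show ?thesis
    by (rule coord_isometry_cong[OF coord_isometry_twist[OF sgnpow_cases[of "sA e1 - sB e1"]]])
      (use False in \<open>auto simp: vsegs_with_supp_def row_exchange_eq Let_def\<close>)
qed


theorem lemma4p12:
  assumes v1: "valid_vseg e1" and v1': "valid_vseg e1'" and v2: "valid_vseg e2"
    and same: "supp e1 = supp e1'"
    and nested: "supp e1 \<subseteq> supp e2 \<or> supp e2 \<subseteq> supp e1"
  shows "(e1 \<noteq> e1' \<longrightarrow> snd (row_exchange e1 e2) \<noteq> snd (row_exchange e1' e2))
    \<and> (adjacent e1 e1' \<longrightarrow> adjacent (snd (row_exchange e1 e2)) (snd (row_exchange e1' e2)))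
    \<and> bij_betw (\<lambda>e. snd (row_exchange e e2))
         (vsegs_with_supp (sA e1) (sB e1)) (vsegs_with_supp (sA e1) (sB e1))
    \<and> (\<forall>S \<subseteq> vsegs_with_supp (sA e1) (sB e1). virtual_interval S \<longrightarrow>
          virtual_interval ((\<lambda>e. snd (row_exchange e e2)) ` S))
    \<and> bij_betw (\<lambda>e. fst (row_exchange e1 e))
         (vsegs_with_supp (sA e2) (sB e2)) (vsegs_with_supp (sA e2) (sB e2))
    \<and> (\<forall>S \<subseteq> vsegs_with_supp (sA e2) (sB e2). virtual_interval S \<longrightarrow>
          virtual_interval ((\<lambda>e. fst (row_exchange e1 e)) ` S))"
proof -
  let ?V1 = "vsegs_with_supp (sA e1) (sB e1)"
  have iso1: "coord_isometry (sA e1) (sB e1) (\<lambda>e. snd (row_exchange e e2))"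
    using coord_isometry_row_exchange_snd[OF v2] .
  have iso2: "coord_isometry (sA e2) (sB e2) (\<lambda>e. fst (row_exchange e1 e))"
    using coord_isometry_row_exchange_fst[OF v1] .
  have "sA e1' = sA e1" "sB e1' = sB e1"
    using same v1 v1' by (auto simp: supp_def valid_vseg_def)
  then have in_V1: "e1 \<in> ?V1" "e1' \<in> ?V1"
    using v1 v1' by (auto simp: vsegs_with_supp_def)
  have "inj_on (\<lambda>e. snd (row_exchange e e2)) ?V1"
    using coord_isometry_bij_betw[OF iso1] by (rule bij_betw_imp_inj_on)
  then show ?thesis
    using in_V1 coord_isometry_adjacent[OF iso1 in_V1]
      coord_isometry_bij_betw[OF iso1] coord_isometry_bij_betw[OF iso2]
      coord_isometry_virtual_interval[OF iso1] coord_isometry_virtual_interval[OF iso2]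
    by (auto dest: inj_onD)
qed

end
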